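(* Consider any fractional two-stage algorithm that in the first stage chooses a fractional matching $x$ of $(D_1,S,E_1)$ (as a function of the first-stage graph and the advice $A$) and in the second stage chooses an optimal solution of (P2) with respect to $x$, and suppose it is $R$-robust and $C$-consistent, i.e. its value $\mathsf{ALG}(G,A)=\sum_j w_j(x_j+y_j)$ satisfies $\mathsf{ALG}(G,A)\ge R\cdot\mathsf{OPT}(G)$ and $\mathsf{ALG}(G,A)\ge C\cdot\mathsf{ADVICE}(G,A)$ for all $G,A$. Define the randomized integral algorithm which samples a random matching $M_1\subseteq E_1$ with $\Pr[(i,j)\in M_1]=x_{ij}$ for all $(i,j)\in E_1$, and then takes $M_2$ to be a maximum-weight matching among the edges of $E_2$ whose offline endpoint is not covered by $M_1$. Then the expected weight of offline vertices covered by $M_1\cup M_2$ is at least $R\cdot\mathsf{OPT}(G)$ and at least $C\cdot\mathsf{ADVICE}(G,A)$ for all $G,A$.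
   Context: Setting (two-stage vertex-weighted bipartite matching with advice). A bipartite graph $G=(D,S,E)$ has offline vertices $S$ with weights $w_j\ge0$ and online vertices $D=D_1\sqcup D_2$; $E_k$ is the set of edges between $D_k$ and $S$. The advice is a matching $A\subseteq E_1$; $S_1$ is the set of offline vertices covered by $A$. A fractional matching $x$ of $(D_1,S,E_1)$ satisfies $x_{ij}\ge0$, $\sum_{j}x_{ij}\le1$ for each $i\in D_1$, and $x_j:=\sum_i x_{ij}\le 1$ for each $j\in S$ (such $x$ is a convex combination of integral matchings, so the sampling is possible). (P2): maximize $\sum_{j\in S}w_jy_j$ subject to $y_{ij}\ge0$ for $(i,j)\in E_2$, $\sum_j y_{ij}\le1$ ($i\in D_2$), $y_j:=\sum_i y_{ij}\le 1-x_j$ ($j\in S$). $\mathsf{OPT}(G)$ is the maximum weight of a matching in $G$ (weight = sum of weights of covered offline vertices); $\mathsf{ADVICE}(G,A)=\sum_{j\in S_1}w_j+\max\{\sum_{j\text{ covered by }M}w_j: M\subseteq E_2\text{ a matching covering no vertex of } S_1\}$. *)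

theory Defs
  imports "HOL-Probability.Probability_Mass_Function"
begin

text \<open>Edges are pairs (online vertex, offline vertex).  Online vertices have type 'd,
  offline vertices type 's.\<close>

definition is_matching :: "('d \<times> 's) set \<Rightarrow> bool" where
  "is_matching M \<longleftrightarrow> (\<forall>e\<in>M. \<forall>e'\<in>M. e \<noteq> e' \<longrightarrow> fst e \<noteq> fst e' \<and> snd e \<noteq> snd e')"

definition mweight :: "('s \<Rightarrow> real) \<Rightarrow> ('d \<times> 's) set \<Rightarrow> real" where
  "mweight w M = sum w (snd ` M)"

definition max_mw :: "('s \<Rightarrow> real) \<Rightarrow> ('d \<times> 's) set \<Rightarrow> real" where
  "max_mw w E = Max {mweight w M | M. M \<subseteq> E \<and> is_matching M}"

definition valid_instance ::
  "'d set \<Rightarrow> 'd set \<Rightarrow> 's set \<Rightarrow> ('d \<times> 's) set \<Rightarrow> ('d \<times> 's) set \<Rightarrow> ('s \<Rightarrow> real)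
    \<Rightarrow> ('d \<times> 's) set \<Rightarrow> bool" where
  "valid_instance D1 D2 S E1 E2 w A \<longleftrightarrow>
     finite D1 \<and> finite D2 \<and> finite S \<and> D1 \<inter> D2 = {} \<and>
     E1 \<subseteq> D1 \<times> S \<and> E2 \<subseteq> D2 \<times> S \<and> (\<forall>j\<in>S. 0 \<le> w j) \<and>
     A \<subseteq> E1 \<and> is_matching A"

definition OPT :: "('s \<Rightarrow> real) \<Rightarrow> ('d \<times> 's) set \<Rightarrow> ('d \<times> 's) set \<Rightarrow> real" where
  "OPT w E1 E2 = max_mw w (E1 \<union> E2)"

definition ADVICE :: "('s \<Rightarrow> real) \<Rightarrow> ('d \<times> 's) set \<Rightarrow> ('d \<times> 's) set \<Rightarrow> real" where
  "ADVICE w E2 A = sum w (snd ` A) + max_mw w {e \<in> E2. snd e \<notin> snd ` A}"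

text \<open>x_j for a fractional assignment x on the edge set E.\<close>
definition load :: "('d \<times> 's) set \<Rightarrow> ('d \<times> 's \<Rightarrow> real) \<Rightarrow> 's \<Rightarrow> real" where
  "load E x j = sum x {e \<in> E. snd e = j}"

definition frac_matching ::
  "'d set \<Rightarrow> 's set \<Rightarrow> ('d \<times> 's) set \<Rightarrow> ('d \<times> 's \<Rightarrow> real) \<Rightarrow> bool" where
  "frac_matching D S E x \<longleftrightarrow>
     (\<forall>e\<in>E. 0 \<le> x e) \<and>
     (\<forall>i\<in>D. sum x {e \<in> E. fst e = i} \<le> 1) \<and>
     (\<forall>j\<in>S. load E x j \<le> 1)"

definition P2_feasible ::
  "'d set \<Rightarrow> 's set \<Rightarrow> ('d \<times> 's) set \<Rightarrow> ('d \<times> 's) set \<Rightarrow> ('d \<times> 's \<Rightarrow> real)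
     \<Rightarrow> ('d \<times> 's \<Rightarrow> real) \<Rightarrow> bool" where
  "P2_feasible D2 S E1 E2 x y \<longleftrightarrow>
     (\<forall>e\<in>E2. 0 \<le> y e) \<and>
     (\<forall>i\<in>D2. sum y {e \<in> E2. fst e = i} \<le> 1) \<and>
     (\<forall>j\<in>S. load E2 y j \<le> 1 - load E1 x j)"

definition P2_opt ::
  "'d set \<Rightarrow> 's set \<Rightarrow> ('d \<times> 's) set \<Rightarrow> ('d \<times> 's) set \<Rightarrow> ('s \<Rightarrow> real)
     \<Rightarrow> ('d \<times> 's \<Rightarrow> real) \<Rightarrow> real" where
  "P2_opt D2 S E1 E2 w x =
     Sup {(\<Sum>j\<in>S. w j * load E2 y j) | y. P2_feasible D2 S E1 E2 x y}"

definition ALG_frac ::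
  "'d set \<Rightarrow> 's set \<Rightarrow> ('d \<times> 's) set \<Rightarrow> ('d \<times> 's) set \<Rightarrow> ('s \<Rightarrow> real)
     \<Rightarrow> ('d \<times> 's \<Rightarrow> real) \<Rightarrow> real" where
  "ALG_frac D2 S E1 E2 w x =
     (\<Sum>j\<in>S. w j * load E1 x j) + P2_opt D2 S E1 E2 w x"

definition second_stage ::
  "('s \<Rightarrow> real) \<Rightarrow> ('d \<times> 's) set \<Rightarrow> ('d \<times> 's) set \<Rightarrow> ('d \<times> 's) set" where
  "second_stage w E2 M1 =
     (let E' = {e \<in> E2. snd e \<notin> snd ` M1} in
      SOME M. M \<subseteq> E' \<and> is_matching M \<and> mweight w M = max_mw w E')"

end

theory Submission
  imports Defs
begin

text \<open>
  The first stage x does not see E2. Hence for every matching M' \<subseteq> E2 the fractional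
  algorithm, run on the instance whose second stage is just M', still plays x, and its value is
  at most the sum of w j * x j over all j plus the sum of w j * (1 - x j) over the vertices j
  covered by M'. As M1 is a matching, x j is exactly the probability that j is covered by M1, so
  this bound is the expected weight of M1 plus that of the edges of M' left free by M1, which
  the second stage of the rounding dominates. Taking for M' the E2-part of an optimal matching
  (resp. an optimal second-stage matching avoiding the advice) leaves OPT (resp. ADVICE)
  unchanged, so robustness and consistency transfer to the rounding.
\<close>

lemma is_matching_empty [simp]: "is_matching {}"
  unfolding is_matching_def by simp

lemma is_matching_subset: "is_matching M \<Longrightarrow> N \<subseteq> M \<Longrightarrow> is_matching N"
  unfolding is_matching_def by blast

lemma is_matching_inj_on_snd: "is_matching M \<Longrightarrow> inj_on snd M"
  unfolding is_matching_def inj_on_def by blast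

lemma card_matching_edges_at:
  assumes "is_matching M"
  shows "card {e \<in> M. snd e = j} = of_bool (j \<in> snd ` M)"
proof -
  have "card {e \<in> M. snd e = j} = card (snd ` {e \<in> M. snd e = j})"
    by (intro card_image[symmetric] inj_on_subset[OF is_matching_inj_on_snd[OF assms]]) auto
  also have "snd ` {e \<in> M. snd e = j} = {j} \<inter> snd ` M"
    by auto
  finally show ?thesis
    by simp
qed

lemma finite_matching_weights: "finite E \<Longrightarrow> finite {mweight w M | M. M \<subseteq> E \<and> is_matching M}"
  by (rule finite_subset[of _ "mweight w ` Pow E"]) auto

lemma max_mw_attained:
  assumes "finite E"
  obtains M where "M \<subseteq> E" "is_matching M" "mweight w M = max_mw w E"
proof -
  have "max_mw w E \<in> {mweight w M | M. M \<subseteq> E \<and> is_matching M}"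
    unfolding max_mw_def by (rule Max_in) (use finite_matching_weights[OF assms] in auto)
  then show ?thesis
    using that by auto
qed

lemma mweight_le_max_mw: "finite E \<Longrightarrow> M \<subseteq> E \<Longrightarrow> is_matching M \<Longrightarrow> mweight w M \<le> max_mw w E"
  unfolding max_mw_def by (rule Max_ge[OF finite_matching_weights]) auto

lemma max_mw_mono:
  assumes "finite F" "E \<subseteq> F"
  shows "max_mw w E \<le> max_mw w F"
proof -
  obtain M where "M \<subseteq> E" "is_matching M" "mweight w M = max_mw w E"
    using max_mw_attained finite_subset[OF assms(2,1)] by blast
  then show ?thesis
    using mweight_le_max_mw[OF assms(1), of M w] assms(2) by auto
qed

lemma max_mw_eq_if_contains_optimum:
  assumes "finite F" "M \<subseteq> E" "E \<subseteq> F" "is_matching M" "mweight w M = max_mw w F"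
  shows "max_mw w E = max_mw w F"
  using assms(5) max_mw_mono[OF assms(1,3), of w]
    mweight_le_max_mw[OF finite_subset[OF assms(3,1)] assms(2,4), of w]
  by simp

lemma second_stage_spec:
  fixes M1 :: "('d \<times> 's) set"
  assumes "finite E2"
  defines "E' \<equiv> {e \<in> E2. snd e \<notin> snd ` M1}"
  shows "second_stage w E2 M1 \<subseteq> E'" "is_matching (second_stage w E2 M1)"
    and "mweight w (second_stage w E2 M1) = max_mw w E'"
proof -
  have "finite E'"
    using assms(1) unfolding E'_def by simp
  then obtain M where "M \<subseteq> E'" "is_matching M" "mweight w M = max_mw w E'"
    by (rule max_mw_attained)
  then have "\<exists>M. M \<subseteq> E' \<and> is_matching M \<and> mweight w M = max_mw w E'"
    by blast
  then have "second_stage w E2 M1 \<subseteq> E' \<and> is_matching (second_stage w E2 M1)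
      \<and> mweight w (second_stage w E2 M1) = max_mw w E'"
    unfolding second_stage_def Let_def E'_def by (rule someI_ex)
  then show "second_stage w E2 M1 \<subseteq> E'" "is_matching (second_stage w E2 M1)"
    "mweight w (second_stage w E2 M1) = max_mw w E'"
    by auto
qed

lemma mweight_second_stage_ge:
  assumes "finite M1" "finite E2" "M' \<subseteq> E2" "is_matching M'"
  shows "mweight w M1 + sum w (snd ` M' - snd ` M1) \<le> mweight w (M1 \<union> second_stage w E2 M1)"
proof -
  let ?E' = "{e \<in> E2. snd e \<notin> snd ` M1}" and ?M2 = "second_stage w E2 M1"
  have "sum w (snd ` M' - snd ` M1) = mweight w {e \<in> M'. snd e \<notin> snd ` M1}"
    unfolding mweight_def by (rule arg_cong[where f = "sum w"]) auto
  also have "\<dots> \<le> max_mw w ?E'"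
    using assms(2-4) by (intro mweight_le_max_mw) (auto intro: is_matching_subset)
  also have "\<dots> = mweight w ?M2"
    using second_stage_spec[OF assms(2)] by simp
  finally have free: "sum w (snd ` M' - snd ` M1) \<le> mweight w ?M2" .
  have "snd ` M1 \<inter> snd ` ?M2 = {}"
  proof (rule equals0I)
    fix j
    assume "j \<in> snd ` M1 \<inter> snd ` ?M2"
    then obtain e where "e \<in> ?M2" "snd e = j" "j \<in> snd ` M1"
      by auto
    then show False
      using second_stage_spec(1)[OF assms(2), of w M1] by auto
  qed
  moreover have "finite ?M2"
    using finite_subset[OF second_stage_spec(1)[OF assms(2), of w M1]] assms(2) by simp
  ultimately have "mweight w (M1 \<union> ?M2) = mweight w M1 + mweight w ?M2"
    unfolding mweight_def image_Un using assms(1) by (intro sum.union_disjoint) auto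
  with free show ?thesis
    by simp
qed

lemma of_bool_covered_eq_sum:
  assumes "is_matching M" "M \<subseteq> E" "finite E"
  shows "of_bool (j \<in> snd ` M) = (\<Sum>e\<in>{e \<in> E. snd e = j}. of_bool (e \<in> M) :: real)"
proof -
  have "{e \<in> E. snd e = j} \<inter> {e. e \<in> M} = {e \<in> M. snd e = j}"
    using assms(2) by blast
  then show ?thesis
    using assms(3) card_matching_edges_at[OF assms(1), of j] by simp
qed

lemma prob_covered_eq_load:
  fixes p :: "('d \<times> 's) set pmf"
  assumes "finite E" "set_pmf p \<subseteq> {M. M \<subseteq> E \<and> is_matching M}"
  shows "measure_pmf.prob p {M. j \<in> snd ` M} = load E (\<lambda>e. measure_pmf.prob p {M. e \<in> M}) j"
proof -
  have "finite (set_pmf p)"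
    using assms by (auto intro: finite_subset[of _ "Pow E"])
  note integrable = integrable_measure_pmf_finite[OF this]
  have "measure_pmf.prob p {M. j \<in> snd ` M} = measure_pmf.expectation p (indicator {M. j \<in> snd ` M})"
    by simp
  also have "\<dots> = measure_pmf.expectation p (\<lambda>M. \<Sum>e\<in>{e \<in> E. snd e = j}. indicator {M. e \<in> M} M)"
  proof (intro integral_cong_AE)
    show "AE M in p. indicator {M. j \<in> snd ` M} M
        = (\<Sum>e\<in>{e \<in> E. snd e = j}. indicator {M. e \<in> M} M :: real)"
      unfolding AE_measure_pmf_iff indicator_def mem_Collect_eq
    proof
      fix M
      assume "M \<in> set_pmf p"
      then show "of_bool (j \<in> snd ` M) = (\<Sum>e\<in>{e \<in> E. snd e = j}. of_bool (e \<in> M) :: real)"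
        using assms by (intro of_bool_covered_eq_sum) auto
    qed
  qed simp_all
  also have "\<dots> = load E (\<lambda>e. measure_pmf.prob p {M. e \<in> M}) j"
    unfolding load_def by (simp add: integrable)
  finally show ?thesis .
qed

lemma P2_opt_le_residual_capacity:
  assumes "finite S" "\<forall>j\<in>S. 0 \<le> w j" "\<forall>j\<in>S. load E1 x j \<le> 1"
  shows "P2_opt D2 S E1 E2 w x \<le> (\<Sum>j\<in>S \<inter> snd ` E2. w j * (1 - load E1 x j))"
  unfolding P2_opt_def
proof (rule cSup_least)
  have "P2_feasible D2 S E1 E2 x (\<lambda>_. 0)"
    using assms(3) unfolding P2_feasible_def load_def by auto
  then show "{\<Sum>j\<in>S. w j * load E2 y j | y. P2_feasible D2 S E1 E2 x y} \<noteq> {}"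
    by blast
next
  fix v
  assume "v \<in> {\<Sum>j\<in>S. w j * load E2 y j | y. P2_feasible D2 S E1 E2 x y}"
  then obtain y where v: "v = (\<Sum>j\<in>S. w j * load E2 y j)" and y: "P2_feasible D2 S E1 E2 x y"
    by blast
  have "w j * load E2 y j \<le> w j * (1 - load E1 x j) * of_bool (j \<in> snd ` E2)" if "j \<in> S" for j
  proof (cases "j \<in> snd ` E2")
    case True
    then show ?thesis
      using y that assms(2) unfolding P2_feasible_def by (simp add: mult_left_mono)
  next
    case False
    then have "{e \<in> E2. snd e = j} = {}"
      by force
    then show ?thesis
      using False unfolding load_def by (simp only: sum.empty) simp
  qed
  then have "v \<le> (\<Sum>j\<in>S. w j * (1 - load E1 x j) * of_bool (j \<in> snd ` E2))"
    unfolding v by (rule sum_mono)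
  then show "v \<le> (\<Sum>j\<in>S \<inter> snd ` E2. w j * (1 - load E1 x j))"
    using assms(1) by (simp add: Int_def)
qed

lemma OPT_eq_matching_second_stage:
  assumes "finite E1" "finite E2"
  obtains M' where "M' \<subseteq> E2" "is_matching M'" "OPT w E1 M' = OPT w E1 E2"
proof -
  obtain M where M: "M \<subseteq> E1 \<union> E2" "is_matching M" "mweight w M = max_mw w (E1 \<union> E2)"
    using max_mw_attained[of "E1 \<union> E2" w] assms by auto
  have "max_mw w (E1 \<union> (M \<inter> E2)) = max_mw w (E1 \<union> E2)"
    using M assms by (intro max_mw_eq_if_contains_optimum[of _ M]) auto
  then show ?thesis
    using that[of "M \<inter> E2"] M(2) unfolding OPT_def by (auto intro: is_matching_subset)
qed

lemma ADVICE_eq_matching_second_stage: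
  assumes "finite E2"
  obtains M' where "M' \<subseteq> E2" "is_matching M'" "ADVICE w M' A = ADVICE w E2 A"
proof -
  let ?F = "{e \<in> E2. snd e \<notin> snd ` A}"
  obtain M where M: "M \<subseteq> ?F" "is_matching M" "mweight w M = max_mw w ?F"
    using max_mw_attained[of ?F w] assms by auto
  have "{e \<in> M. snd e \<notin> snd ` A} = M"
    using M(1) by auto
  moreover have "max_mw w M = max_mw w ?F"
    using M assms by (intro max_mw_eq_if_contains_optimum[of _ M]) auto
  ultimately have "ADVICE w M A = ADVICE w E2 A"
    unfolding ADVICE_def by simp
  then show ?thesis
    using that M by auto
qed

lemma ALG_frac_le_expected_rounding:
  fixes p :: "('d \<times> 's) set pmf"
  assumes fin: "finite E1" "finite E2" "finite S" and E1: "snd ` E1 \<subseteq> S"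
    and w: "\<forall>j\<in>S. 0 \<le> w j" and x: "\<forall>j\<in>S. load E1 x j \<le> 1"
    and supp: "set_pmf p \<subseteq> {M. M \<subseteq> E1 \<and> is_matching M}"
    and marg: "\<forall>e\<in>E1. measure_pmf.prob p {M. e \<in> M} = x e"
    and M': "M' \<subseteq> E2" "is_matching M'" "snd ` M' \<subseteq> S"
  shows "ALG_frac D2 S E1 M' w x
    \<le> measure_pmf.expectation p (\<lambda>M1. mweight w (M1 \<union> second_stage w E2 M1))"
proof -
  have "finite (set_pmf p)"
    using fin(1) supp by (auto intro: finite_subset[of _ "Pow E1"])
  note integrable = integrable_measure_pmf_finite[OF this]
  let ?cov = "\<lambda>j. indicator {M. j \<in> snd ` M} :: ('d \<times> 's) set \<Rightarrow> real"
  have cov: "measure_pmf.prob p {M. j \<in> snd ` M} = load E1 x j" for j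
    using prob_covered_eq_load[OF fin(1) supp, of j] marg unfolding load_def by simp
  have "ALG_frac D2 S E1 M' w x
      \<le> (\<Sum>j\<in>S. w j * load E1 x j) + (\<Sum>j\<in>snd ` M'. w j * (1 - load E1 x j))"
    using P2_opt_le_residual_capacity[OF fin(3) w x, of D2 M'] M'(3)
    unfolding ALG_frac_def by (simp add: Int_absorb1)
  also have "\<dots> = measure_pmf.expectation p
      (\<lambda>M. (\<Sum>j\<in>S. w j * ?cov j M) + (\<Sum>j\<in>snd ` M'. w j * (1 - ?cov j M)))"
    by (simp add: integral_add integral_sum integral_diff integrable cov)
  also have "\<dots> \<le> measure_pmf.expectation p (\<lambda>M1. mweight w (M1 \<union> second_stage w E2 M1))"
  proof (intro integral_mono_AE integrable)
    show "AE M in p. (\<Sum>j\<in>S. w j * ?cov j M) + (\<Sum>j\<in>snd ` M'. w j * (1 - ?cov j M))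
        \<le> mweight w (M \<union> second_stage w E2 M)"
      unfolding AE_measure_pmf_iff
    proof
      fix M
      assume "M \<in> set_pmf p"
      with supp have M: "M \<subseteq> E1"
        by auto
      then have "finite M"
        using fin(1) by (rule finite_subset)
      have "snd ` M \<subseteq> S"
        using E1 M by auto
      then have "(\<Sum>j\<in>S. w j * ?cov j M) = mweight w M"
        using fin(3) unfolding mweight_def indicator_def by (simp add: Int_absorb1)
      moreover have "(\<Sum>j\<in>snd ` M'. w j * (1 - ?cov j M)) = sum w (snd ` M' - snd ` M)"
        using finite_subset[OF M'(1) fin(2)]
        by (simp add: indicator_def of_bool_not_iff[symmetric] Diff_eq Compl_eq)
      ultimately show "(\<Sum>j\<in>S. w j * ?cov j M) + (\<Sum>j\<in>snd ` M'. w j * (1 - ?cov j M))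
          \<le> mweight w (M \<union> second_stage w E2 M)"
        using mweight_second_stage_ge[OF \<open>finite M\<close> fin(2) M'(1,2)] by simp
    qed
  qed
  finally show ?thesis .
qed

theorem mainTheorem8:
  fixes stage1 :: "'d set \<Rightarrow> 's set \<Rightarrow> ('d \<times> 's) set \<Rightarrow> ('s \<Rightarrow> real) \<Rightarrow> ('d \<times> 's) set
                     \<Rightarrow> ('d \<times> 's \<Rightarrow> real)"
    and R C :: real
  assumes frac: "\<And>D1 D2 S E1 E2 w A. valid_instance D1 D2 S E1 E2 w A \<Longrightarrow>
                   frac_matching D1 S E1 (stage1 D1 S E1 w A)"
    and robust: "\<And>D1 D2 S E1 E2 w A. valid_instance D1 D2 S E1 E2 w A \<Longrightarrow>
                   ALG_frac D2 S E1 E2 w (stage1 D1 S E1 w A) \<ge> R * OPT w E1 E2"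
    and consistent: "\<And>D1 D2 S E1 E2 w A. valid_instance D1 D2 S E1 E2 w A \<Longrightarrow>
                   ALG_frac D2 S E1 E2 w (stage1 D1 S E1 w A) \<ge> C * ADVICE w E2 A"
    and inst: "valid_instance D1 D2 S E1 E2 w A"
    and supp: "set_pmf p \<subseteq> {M. M \<subseteq> E1 \<and> is_matching M}"
    and marg: "\<forall>e\<in>E1. measure_pmf.prob p {M. e \<in> M} = stage1 D1 S E1 w A e"
  shows "measure_pmf.expectation p (\<lambda>M1. mweight w (M1 \<union> second_stage w E2 M1))
           \<ge> R * OPT w E1 E2
       \<and> measure_pmf.expectation p (\<lambda>M1. mweight w (M1 \<union> second_stage w E2 M1))
           \<ge> C * ADVICE w E2 A"
proof -
  let ?x = "stage1 D1 S E1 w A"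
    and ?E = "measure_pmf.expectation p (\<lambda>M1. mweight w (M1 \<union> second_stage w E2 M1))"
  have "finite D1" "finite D2" "finite S" "E1 \<subseteq> D1 \<times> S" "E2 \<subseteq> D2 \<times> S"
    using inst unfolding valid_instance_def by auto
  then have fin: "finite E1" "finite E2" "finite S"
    by (auto intro: rev_finite_subset[of "_ \<times> _"])
  have restrict: "valid_instance D1 D2 S E1 M' w A" if "M' \<subseteq> E2" for M'
    using inst that unfolding valid_instance_def by auto
  have key: "ALG_frac D2 S E1 M' w ?x \<le> ?E" if "M' \<subseteq> E2" "is_matching M'" for M'
  proof (rule ALG_frac_le_expected_rounding[OF fin _ _ _ supp marg that])
    show "snd ` E1 \<subseteq> S" "snd ` M' \<subseteq> S" "\<forall>j\<in>S. 0 \<le> w j"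
      using inst that(1) unfolding valid_instance_def by auto
    show "\<forall>j\<in>S. load E1 ?x j \<le> 1"
      using frac[OF inst] unfolding frac_matching_def by simp
  qed
  obtain M' where M': "M' \<subseteq> E2" "is_matching M'" "OPT w E1 M' = OPT w E1 E2"
    using OPT_eq_matching_second_stage[OF fin(1,2)] .
  obtain M'' where M'': "M'' \<subseteq> E2" "is_matching M''" "ADVICE w M'' A = ADVICE w E2 A"
    using ADVICE_eq_matching_second_stage[OF fin(2)] .
  have "R * OPT w E1 E2 \<le> ?E"
    using order_trans[OF robust[OF restrict[OF M'(1)]] key[OF M'(1,2)]] M'(3) by simp
  moreover have "C * ADVICE w E2 A \<le> ?E"
    using order_trans[OF consistent[OF restrict[OF M''(1)]] key[OF M''(1,2)]] M''(3) by simp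
  ultimately show ?thesis
    by simp
qed

end
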